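(* Let $n,d,t$ be integers with $2\le d\le n-2$ and $2\le t\le d$. Then $m_{G_{n,d,t}}[n-d+2,n]=n-d$ and $\mu_{n-d}(G_{n,d,t})=n-d+2$.
   Context: For a graph $G$ of order $n$, $\mu_1(G)\ge\dots\ge\mu_n(G)$ are the eigenvalues of the Laplacian matrix $L(G)=D(G)-A(G)$, and for an interval $I\subseteq[0,n]$, $m_G I$ is the number of Laplacian eigenvalues of $G$ (with multiplicity) in $I$. $G_{n,d,t}$ is the graph obtained from a path $v_1v_2\dots v_{d+1}$ and a vertex-disjoint complete graph $K_{n-d-1}$ by adding all edges between every vertex of $K_{n-d-1}$ and each of $v_{t-1},v_t,v_{t+1}$. *)

theory Defs
  imports "Jordan_Normal_Form.Char_Poly"
begin

text \<open>Simple graphs on vertex set {0..<n}, given by a symmetric irreflexive adjacency predicate.\<close>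

definition laplacian :: "nat \<Rightarrow> (nat \<Rightarrow> nat \<Rightarrow> bool) \<Rightarrow> real mat" where
  "laplacian n adj = mat n n (\<lambda>(i,j).
     if i = j then real (card {k. k < n \<and> adj i k})
     else if adj i j then -1 else 0)"

definition lap_eigs :: "nat \<Rightarrow> (nat \<Rightarrow> nat \<Rightarrow> bool) \<Rightarrow> real multiset" where
  "lap_eigs n adj = proots (char_poly (laplacian n adj))"

definition lap_count :: "nat \<Rightarrow> (nat \<Rightarrow> nat \<Rightarrow> bool) \<Rightarrow> real set \<Rightarrow> nat" where
  "lap_count n adj I = size (filter_mset (\<lambda>x. x \<in> I) (lap_eigs n adj))"

definition lap_mu :: "nat \<Rightarrow> (nat \<Rightarrow> nat \<Rightarrow> bool) \<Rightarrow> nat \<Rightarrow> real" where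
  "lap_mu n adj k = rev (sorted_list_of_multiset (lap_eigs n adj)) ! (k - 1)"

text \<open>G_{n,d,t}: path v_1..v_{d+1} is vertices 0..d (v_i = i-1); K_{n-d-1} is vertices d+1..n-1,
  each joined to v_{t-1}, v_t, v_{t+1}, i.e. vertices t-2, t-1, t.\<close>
definition G_ndt :: "nat \<Rightarrow> nat \<Rightarrow> nat \<Rightarrow> nat \<Rightarrow> nat \<Rightarrow> bool" where
  "G_ndt n d t i j \<longleftrightarrow> i < n \<and> j < n \<and> i \<noteq> j \<and>
     ((i \<le> d \<and> j \<le> d \<and> (i = j + 1 \<or> j = i + 1))
      \<or> (d < i \<and> d < j)
      \<or> (d < i \<and> j \<in> {t - 2, t - 1, t})
      \<or> (d < j \<and> i \<in> {t - 2, t - 1, t}))"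

end

theory Submission
  imports Defs "Jordan_Normal_Form.Jordan_Normal_Form_Uniqueness"
    "Jordan_Normal_Form.Jordan_Normal_Form_Existence"
begin

text \<open>
  Let c = n - d + 2 and let Q be the Laplacian quadratic form of G = G_{n,d,t}. If Q(x) >= c |x|^2
  on a subspace of dimension k, that subspace meets the span of the eigenvectors with eigenvalue
  below c only in 0, so at least k eigenvalues are >= c; the strict and the reverse inequalities
  bound the eigenvalue counts from above in the same way. Three test subspaces suffice.
  The vectors supported on the clique K and on v_{t-1}, v_t, v_{t+1}, with zero sum and equal
  values at v_{t-1} and v_{t+1}, form a space of dimension n - d on which Q(x) >= c |x|^2, because
  G contains the complete graph on these n - d + 2 vertices minus the edge v_{t-1} v_{t+1}.
  The vectors supported on the path and vanishing at v_t (dimension d) satisfy Q(x) < c |x|^2,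
  and the vectors whose entries on K and v_t sum to zero (dimension n - 1) satisfy
  Q(x) <= c |x|^2: on them Q splits into c times the squared norm on K and v_t plus two path
  forms with end weight n - d >= 2, each at most n - d + 2 times the squared norm of its path.
  So exactly n - d eigenvalues are >= c and at most one exceeds c, and all of them are <= n.

  Symmetric real matrices are diagonalised via the Jordan normal form: their Jordan blocks have
  size 1 because ker (M * M) = ker M for symmetric M.
\<close>

section \<open>Coordinate vectors\<close>

text \<open>Vectors of R^n are functions nat => real of which only the values below n matter;
  families of vectors are indexed by arbitrary sets.\<close>

definition dot :: "nat \<Rightarrow> (nat \<Rightarrow> real) \<Rightarrow> (nat \<Rightarrow> real) \<Rightarrow> real" where
  "dot n x y = (\<Sum>i<n. x i * y i)"

definition quad_form :: "nat \<Rightarrow> real mat \<Rightarrow> (nat \<Rightarrow> real) \<Rightarrow> real" where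
  "quad_form n A x = (\<Sum>i<n. x i * (\<Sum>k<n. A $$ (i,k) * x k))"

definition lincomb :: "'j set \<Rightarrow> ('j \<Rightarrow> real) \<Rightarrow> ('j \<Rightarrow> nat \<Rightarrow> real) \<Rightarrow> nat \<Rightarrow> real" where
  "lincomb J \<alpha> v i = (\<Sum>j\<in>J. \<alpha> j * v j i)"

definition lin_indep :: "nat \<Rightarrow> 'j set \<Rightarrow> ('j \<Rightarrow> nat \<Rightarrow> real) \<Rightarrow> bool" where
  "lin_indep n J v \<longleftrightarrow> (\<forall>\<alpha>. (\<forall>i<n. lincomb J \<alpha> v i = 0) \<longrightarrow> (\<forall>j\<in>J. \<alpha> j = 0))"

lemma lin_indepI:
  "(\<And>\<alpha> j. (\<And>i. i < n \<Longrightarrow> lincomb J \<alpha> v i = 0) \<Longrightarrow> j \<in> J \<Longrightarrow> \<alpha> j = 0) \<Longrightarrow> lin_indep n J v"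
  unfolding lin_indep_def by blast

lemma lin_indepD:
  "lin_indep n J v \<Longrightarrow> (\<And>i. i < n \<Longrightarrow> lincomb J \<alpha> v i = 0) \<Longrightarrow> j \<in> J \<Longrightarrow> \<alpha> j = 0"
  unfolding lin_indep_def by blast

lemma dot_cong: "(\<And>i. i < n \<Longrightarrow> x i = y i) \<Longrightarrow> dot n x x = dot n y y"
  unfolding dot_def by (intro sum.cong) auto

lemma quad_form_cong: "(\<And>i. i < n \<Longrightarrow> x i = y i) \<Longrightarrow> quad_form n A x = quad_form n A y"
  unfolding quad_form_def by (intro sum.cong refl arg_cong2[where f = times]) auto

lemma dot_self_nonneg: "0 \<le> dot n x x"
  unfolding dot_def by (intro sum_nonneg) simp

lemma dot_self_pos:
  assumes "i < n" "x i \<noteq> 0"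
  shows "0 < dot n x x"
proof -
  have "0 < x i * x i" using assms(2) not_real_square_gt_zero by blast
  thus ?thesis unfolding dot_def using assms(1) by (intro sum_pos2[of _ i]) auto
qed

lemma dot_lincomb:
  "dot n (lincomb S \<alpha> v) (lincomb T \<beta> v) = (\<Sum>j\<in>S. \<Sum>l\<in>T. \<alpha> j * \<beta> l * dot n (v j) (v l))"
proof -
  have "dot n (lincomb S \<alpha> v) (lincomb T \<beta> v)
      = (\<Sum>i<n. \<Sum>j\<in>S. \<Sum>l\<in>T. \<alpha> j * \<beta> l * (v j i * v l i))"
    unfolding dot_def lincomb_def by (simp add: sum_product mult_ac)
  also have "\<dots> = (\<Sum>j\<in>S. \<Sum>i<n. \<Sum>l\<in>T. \<alpha> j * \<beta> l * (v j i * v l i))"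
    by (rule sum.swap)
  also have "\<dots> = (\<Sum>j\<in>S. \<Sum>l\<in>T. \<Sum>i<n. \<alpha> j * \<beta> l * (v j i * v l i))"
    by (intro sum.cong refl) (rule sum.swap)
  finally show ?thesis unfolding dot_def by (simp add: sum_distrib_left)
qed

lemma lincomb_eq_0: "(\<And>j. j \<in> J \<Longrightarrow> v j i = 0) \<Longrightarrow> lincomb J \<alpha> v i = 0"
  unfolding lincomb_def by simp

lemma lincomb_eq: "(\<And>j. j \<in> J \<Longrightarrow> v j i = v j i') \<Longrightarrow> lincomb J \<alpha> v i = lincomb J \<alpha> v i'"
  unfolding lincomb_def by simp

lemma sum_lincomb: "(\<Sum>i\<in>U. lincomb J \<alpha> v i) = (\<Sum>j\<in>J. \<alpha> j * (\<Sum>i\<in>U. v j i))"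
  unfolding lincomb_def sum_distrib_left by (rule sum.swap)

lemma lin_indep_dot_lincomb_pos:
  assumes "lin_indep n J v" "j \<in> J" "\<alpha> j \<noteq> 0"
  shows "0 < dot n (lincomb J \<alpha> v) (lincomb J \<alpha> v)"
proof -
  obtain i where "i < n" "lincomb J \<alpha> v i \<noteq> 0"
    using lin_indepD[OF assms(1) _ assms(2)] assms(3) by blast
  thus ?thesis by (rule dot_self_pos)
qed

lemma lin_indep_subset:
  assumes "finite J" "lin_indep n J v" "S \<subseteq> J"
  shows "lin_indep n S v"
proof (rule lin_indepI)
  fix \<alpha> j assume zero: "\<And>i. i < n \<Longrightarrow> lincomb S \<alpha> v i = 0" and j: "j \<in> S"
  define \<alpha>' where "\<alpha>' l = (if l \<in> S then \<alpha> l else 0)" for l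
  have "\<alpha>' j = 0"
  proof (rule lin_indepD[OF assms(2)])
    fix i assume "i < n"
    have "lincomb J \<alpha>' v i = lincomb S \<alpha> v i"
      unfolding lincomb_def \<alpha>'_def using assms(1,3) by (intro sum.mono_neutral_cong_right) auto
    with zero[OF \<open>i < n\<close>] show "lincomb J \<alpha>' v i = 0" by simp
  qed (use j assms(3) in auto)
  with j show "\<alpha> j = 0" unfolding \<alpha>'_def by simp
qed

lemma lincomb_pivot:
  assumes "finite J" "\<And>j l. j \<in> J \<Longrightarrow> l \<in> J \<Longrightarrow> v j l = (if j = l then 1 else 0)" "l \<in> J"
  shows "lincomb J \<alpha> v l = \<alpha> l"
proof -
  have "lincomb J \<alpha> v l = (\<Sum>j\<in>J. if j = l then \<alpha> j else 0)"
    unfolding lincomb_def using assms(2,3) by (intro sum.cong) auto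
  thus ?thesis using assms(1,3) by simp
qed

lemma lin_indep_pivot:
  assumes "finite J" "J \<subseteq> {..<n}" "\<And>j l. j \<in> J \<Longrightarrow> l \<in> J \<Longrightarrow> v j l = (if j = l then 1 else 0)"
  shows "lin_indep n J v"
proof (rule lin_indepI)
  fix \<alpha> l assume zero: "\<And>i. i < n \<Longrightarrow> lincomb J \<alpha> v i = 0" and "l \<in> J"
  have "\<alpha> l = lincomb J \<alpha> v l" by (rule lincomb_pivot[OF assms(1,3) \<open>l \<in> J\<close>, symmetric])
  also have "\<dots> = 0" using assms(2) \<open>l \<in> J\<close> by (intro zero) auto
  finally show "\<alpha> l = 0" .
qed

lemma not_lin_indep_if_card_gt:
  assumes "finite J" "n < card J"
  shows "\<not> lin_indep n J v"
  using assms
proof (induct n arbitrary: J v)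
  case 0
  then obtain j where "j \<in> J" by fastforce
  thus ?case unfolding lin_indep_def by (auto intro!: exI[of _ "\<lambda>_. 1"])
next
  case (Suc n)
  show ?case
  proof (cases "\<exists>j\<in>J. v j n \<noteq> 0")
    case False
    have "\<not> lin_indep n J v" using Suc by simp
    thus ?thesis using False unfolding lin_indep_def lincomb_def by (auto simp: less_Suc_eq)
  next
    case True
    then obtain j0 where j0: "j0 \<in> J" "v j0 n \<noteq> 0" by blast
    \<comment> \<open>Gaussian elimination of coordinate \<open>n\<close> by the vector \<open>v j0\<close>\<close>
    define J' where "J' = J - {j0}"
    define w where "w j i = v j i - v j n / v j0 n * v j0 i" for j i
    have "\<not> lin_indep n J' w"
      by (rule Suc.hyps) (use Suc.prems j0 in \<open>auto simp: J'_def\<close>)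
    then obtain \<gamma> j where \<gamma>: "\<forall>i<n. lincomb J' \<gamma> w i = 0" "j \<in> J'" "\<gamma> j \<noteq> 0"
      unfolding lin_indep_def by blast
    define \<gamma>' where "\<gamma>' = \<gamma>(j0 := - lincomb J' \<gamma> v n / v j0 n)"
    have "lincomb J \<gamma>' v i = lincomb J' \<gamma> w i" for i
    proof -
      have "lincomb J \<gamma>' v i = \<gamma>' j0 * v j0 i + lincomb J' \<gamma> v i"
        unfolding lincomb_def J'_def \<gamma>'_def using j0 Suc.prems(1)
        by (simp add: sum.remove[of J j0])
      also have "\<dots> = lincomb J' \<gamma> w i"
        unfolding lincomb_def w_def \<gamma>'_def
        by (simp add: right_diff_distrib sum_subtractf sum_distrib_right sum_divide_distrib mult.assoc)
      finally show ?thesis .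
    qed
    moreover have "lincomb J' \<gamma> w n = 0" unfolding lincomb_def w_def using j0 by simp
    ultimately have "\<forall>i<Suc n. lincomb J \<gamma>' v i = 0" using \<gamma>(1) by (auto simp: less_Suc_eq)
    moreover have "j \<in> J" "\<gamma>' j \<noteq> 0" using \<gamma> unfolding J'_def \<gamma>'_def by auto
    ultimately show ?thesis unfolding lin_indep_def by blast
  qed
qed

lemma common_nonzero_lincomb:
  assumes I: "finite I" "lin_indep n I v" and S: "finite S" "lin_indep n S w"
    and card: "n < card I + card S"
  obtains \<alpha> \<beta> where "\<exists>j\<in>I. \<alpha> j \<noteq> 0" "\<exists>j\<in>S. \<beta> j \<noteq> 0"
    "\<And>i. i < n \<Longrightarrow> lincomb I \<alpha> v i = lincomb S \<beta> w i"
proof -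
  define V where "V x = (case x of Inl j \<Rightarrow> v j | Inr j \<Rightarrow> - w j)" for x
  have "\<not> lin_indep n (I <+> S) V"
    using I S card by (intro not_lin_indep_if_card_gt) (auto simp: card_Plus)
  then obtain \<gamma> x where \<gamma>: "\<forall>i<n. lincomb (I <+> S) \<gamma> V i = 0" "x \<in> I <+> S" "\<gamma> x \<noteq> 0"
    unfolding lin_indep_def by blast
  define \<alpha> where "\<alpha> j = \<gamma> (Inl j)" for j
  define \<beta> where "\<beta> j = \<gamma> (Inr j)" for j
  have eq: "lincomb I \<alpha> v i = lincomb S \<beta> w i" if "i < n" for i
  proof -
    have "lincomb (I <+> S) \<gamma> V i = lincomb I \<alpha> v i - lincomb S \<beta> w i"
      unfolding lincomb_def V_def \<alpha>_def \<beta>_def using I(1) S(1) by (simp add: sum.Plus sum_negf)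
    with \<gamma>(1) that show ?thesis by simp
  qed
  have "\<exists>j\<in>I. \<alpha> j \<noteq> 0"
  proof (rule ccontr)
    assume "\<not> ?thesis"
    hence "\<forall>i<n. lincomb S \<beta> w i = 0" using eq unfolding lincomb_def by simp
    with S(2) have "\<forall>j\<in>S. \<beta> j = 0" unfolding lin_indep_def by blast
    with \<gamma>(2,3) \<open>\<not> ?thesis\<close> show False unfolding \<alpha>_def \<beta>_def by auto
  qed
  moreover have "\<exists>j\<in>S. \<beta> j \<noteq> 0"
  proof (rule ccontr)
    assume "\<not> ?thesis"
    hence "\<forall>i<n. lincomb I \<alpha> v i = 0" using eq unfolding lincomb_def by simp
    with I(2) calculation show False unfolding lin_indep_def by blast
  qed
  ultimately show ?thesis using that eq by blast
qed

section \<open>Eigenbases of symmetric real matrices\<close>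

lemma sym_mat_eigenvalue_real:
  fixes A :: "real mat"
  assumes A: "A \<in> carrier_mat n n"
    and sym: "\<And>i j. i < n \<Longrightarrow> j < n \<Longrightarrow> A $$ (i,j) = A $$ (j,i)"
    and ev: "eigenvalue (map_mat complex_of_real A) a"
  shows "a \<in> \<real>"
proof -
  let ?C = "map_mat complex_of_real A"
  from ev obtain v where v: "v \<in> carrier_vec n" "v \<noteq> 0\<^sub>v n" "?C *\<^sub>v v = a \<cdot>\<^sub>v v"
    unfolding eigenvalue_def eigenvector_def using A by auto
  define s where "s = (\<Sum>i<n. \<Sum>j<n. cnj (v$i) * complex_of_real (A$$(i,j)) * v$j)"
  define N where "N = (\<Sum>i<n. (cmod (v$i))\<^sup>2)"
  have row: "(\<Sum>j<n. complex_of_real (A$$(i,j)) * v$j) = a * v$i" if "i < n" for i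
    using arg_cong[OF v(3), of "\<lambda>w. w $ i"] that A v(1)
    by (auto simp: scalar_prod_def lessThan_atLeast0)
  have "s = (\<Sum>i<n. cnj (v$i) * (\<Sum>j<n. complex_of_real (A$$(i,j)) * v$j))"
    unfolding s_def by (simp add: sum_distrib_left mult.assoc)
  also have "\<dots> = (\<Sum>i<n. a * (cnj (v$i) * v$i))"
    using row by (simp add: mult.left_commute)
  also have "\<dots> = a * of_real N"
  proof -
    have "cnj z * z = of_real ((cmod z)\<^sup>2)" for z
      by (metis complex_norm_square mult.commute)
    thus ?thesis unfolding N_def of_real_sum sum_distrib_left by simp
  qed
  finally have s_eq: "s = a * of_real N" .
  have "cnj s = (\<Sum>i<n. \<Sum>j<n. v$i * complex_of_real (A$$(i,j)) * cnj (v$j))"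
    unfolding s_def by simp
  also have "\<dots> = (\<Sum>j<n. \<Sum>i<n. v$i * complex_of_real (A$$(i,j)) * cnj (v$j))"
    by (rule sum.swap)
  also have "\<dots> = s"
    unfolding s_def by (intro sum.cong refl) (simp add: sym mult.commute mult.left_commute)
  finally have "cnj s = s" .
  obtain i0 where i0: "i0 < n" "v$i0 \<noteq> 0"
    using v(1,2) by (metis eq_vecI carrier_vecD index_zero_vec(1,2))
  have "N > 0"
    unfolding N_def using i0 by (intro sum_pos2[of _ i0]) auto
  with \<open>cnj s = s\<close> s_eq have "cnj a = a" by simp
  thus ?thesis by (simp add: Reals_cnj_iff)
qed

lemma sym_mat_char_poly_splits:
  fixes A :: "real mat"
  assumes A: "A \<in> carrier_mat n n"
    and sym: "\<And>i j. i < n \<Longrightarrow> j < n \<Longrightarrow> A $$ (i,j) = A $$ (j,i)"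
  shows "\<exists>es. char_poly A = (\<Prod>a\<leftarrow>es. [:-a,1:])"
proof -
  let ?C = "map_mat complex_of_real A"
  have C: "?C \<in> carrier_mat n n" using A by simp
  obtain as where as: "char_poly ?C = (\<Prod>a\<leftarrow>as. [:-a,1:])"
    using char_poly_factorized[OF C] by auto
  have real: "a \<in> \<real>" if "a \<in> set as" for a
  proof -
    have "poly (char_poly ?C) a = 0" unfolding as using that by (rule linear_poly_root)
    then show ?thesis
      using eigenvalue_root_char_poly[OF C] sym_mat_eigenvalue_real[OF A sym] by blast
  qed
  interpret of_real_poly: map_poly_inj_idom_hom complex_of_real ..
  have "map_poly complex_of_real (\<Prod>a\<leftarrow>map Re as. [:-a,1:]) = (\<Prod>a\<leftarrow>as. [:-a,1:])"
    using real by (induct as) (auto simp: hom_distribs)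
  also have "\<dots> = map_poly complex_of_real (char_poly A)"
    using as of_real_hom.char_poly_hom[OF A] by metis
  finally have "char_poly A = (\<Prod>a\<leftarrow>map Re as. [:-a,1:])"
    using of_real_poly.injectivity by metis
  thus ?thesis by blast
qed

lemma sym_mat_kernel_sq:
  fixes M :: "real mat"
  assumes M: "M \<in> carrier_mat n n"
    and sym: "\<And>i j. i < n \<Longrightarrow> j < n \<Longrightarrow> M $$ (i,j) = M $$ (j,i)"
    and v: "v \<in> carrier_vec n" and z: "M *\<^sub>v (M *\<^sub>v v) = 0\<^sub>v n"
  shows "M *\<^sub>v v = 0\<^sub>v n"
proof -
  define y where "y = M *\<^sub>v v"
  have y: "y \<in> carrier_vec n" unfolding y_def using M v by simp
  have yi: "y $ i = (\<Sum>k<n. M$$(i,k) * v$k)" if "i < n" for i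
    unfolding y_def using M v that by (auto simp: scalar_prod_def lessThan_atLeast0)
  have My: "(\<Sum>k<n. M$$(i,k) * y$k) = 0" if i: "i < n" for i
  proof -
    have "(M *\<^sub>v y) $ i = 0" using z i unfolding y_def by simp
    thus ?thesis using M y i by (auto simp: scalar_prod_def lessThan_atLeast0)
  qed
  \<comment> \<open>\<open>y \<bullet> y = y \<bullet> M v = M y \<bullet> v = 0\<close>\<close>
  have "(\<Sum>i<n. y$i * y$i) = (\<Sum>i<n. \<Sum>k<n. y$i * M$$(i,k) * v$k)"
    using yi by (simp add: sum_distrib_left mult.assoc)
  also have "\<dots> = (\<Sum>k<n. v$k * (\<Sum>i<n. M$$(k,i) * y$i))"
    by (subst sum.swap) (simp add: sum_distrib_left sym mult.commute mult.left_commute)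
  also have "\<dots> = 0" using My by simp
  finally have "(\<Sum>i<n. y$i * y$i) = 0" .
  hence "\<forall>i\<in>{..<n}. y$i * y$i = 0" by (subst (asm) sum_nonneg_eq_0_iff) auto
  hence "y = 0\<^sub>v n" using y by (intro eq_vecI) auto
  thus ?thesis unfolding y_def .
qed

lemma sym_mat_jordan_block_size_1:
  fixes A :: "real mat"
  assumes A: "A \<in> carrier_mat n n"
    and sym: "\<And>i j. i < n \<Longrightarrow> j < n \<Longrightarrow> A $$ (i,j) = A $$ (j,i)"
    and jnf: "jordan_nf A n_as" and block: "(k, ev) \<in> set n_as"
  shows "k = 1"
proof -
  let ?M = "char_matrix A ev"
  have M: "?M \<in> carrier_mat n n" using A by simp
  have symM: "\<And>i j. i < n \<Longrightarrow> j < n \<Longrightarrow> ?M $$ (i,j) = ?M $$ (j,i)"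
    using A sym by (auto simp: char_matrix_def)
  have "mat_kernel (?M * ?M) = mat_kernel ?M"
  proof
    show "mat_kernel (?M * ?M) \<subseteq> mat_kernel ?M"
    proof
      fix v assume "v \<in> mat_kernel (?M * ?M)"
      hence v: "v \<in> carrier_vec n" "?M *\<^sub>v (?M *\<^sub>v v) = 0\<^sub>v n"
        using mat_kernelD[of "?M * ?M" n n] M assoc_mult_mat_vec[OF M M] by auto
      show "v \<in> mat_kernel ?M" by (rule mat_kernelI[OF M v(1) sym_mat_kernel_sq[OF M symM v]])
    qed
    show "mat_kernel ?M \<subseteq> mat_kernel (?M * ?M)" by (rule mat_kernel_mult_subset[OF M M])
  qed
  hence "dim_gen_eigenspace A ev 2 = dim_gen_eigenspace A ev 1"
    unfolding dim_gen_eigenspace_def kernel_dim_def using M by (simp add: numeral_2_eq_2)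
  moreover define ks where "ks = map fst [(k, e)\<leftarrow>n_as . e = ev]"
  ultimately have eq: "(\<Sum>k\<leftarrow>ks. min 2 k) = (\<Sum>k\<leftarrow>ks. min 1 k)"
    using dim_gen_eigenspace[OF jnf] by simp
  have "k \<in> set ks" unfolding ks_def using block by force
  then obtain xs ys where ks: "ks = xs @ k # ys" by (meson split_list)
  have "k \<noteq> 0" using jnf block unfolding jordan_nf_def by force
  moreover have "\<not> k \<ge> 2"
  proof
    assume "k \<ge> 2"
    have "(\<Sum>k\<leftarrow>xs. min 1 k) \<le> (\<Sum>k\<leftarrow>xs. min 2 k)" "(\<Sum>k\<leftarrow>ys. min 1 k) \<le> (\<Sum>k\<leftarrow>ys. min 2 k)"
      by (intro sum_list_mono; simp)+
    with \<open>k \<ge> 2\<close> eq show False unfolding ks by simp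
  qed
  ultimately show ?thesis by simp
qed

lemma jordan_matrix_of_size_1_blocks:
  assumes "\<forall>x\<in>set n_as. fst x = 1"
  shows "jordan_matrix n_as
    = mat (length n_as) (length n_as) (\<lambda>(i,j). if i = j then snd (n_as ! i) else 0)"
  using assms
proof (induct n_as)
  case Nil
  show ?case unfolding jordan_matrix_def by (intro eq_matI) auto
next
  case (Cons x rest)
  obtain a where x: "x = (1, a)" using Cons(2) by (cases x) auto
  have "jordan_matrix rest
      = mat (length rest) (length rest) (\<lambda>(i,j). if i = j then snd (rest ! i) else 0)"
    using Cons by auto
  hence "jordan_matrix (x # rest) = four_block_mat (jordan_block 1 a)
      (0\<^sub>m 1 (length rest)) (0\<^sub>m (length rest) 1) (jordan_matrix rest)"
    unfolding x jordan_matrix_def by (simp add: Let_def)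
  thus ?case unfolding \<open>jordan_matrix rest = _\<close>
    by (intro eq_matI) (auto simp: jordan_block_def nth_Cons' x)
qed

lemma prod_list_map_nth: "prod_list (map f xs) = (\<Prod>j<length xs. f (xs!j))"
  by (induct xs) (simp_all del: prod.lessThan_Suc add: prod.lessThan_Suc_shift)

lemma invertible_mat_cols_lin_indep:
  fixes P :: "real mat"
  assumes P: "P \<in> carrier_mat n n" and Q: "Q \<in> carrier_mat n n" and QP: "Q * P = 1\<^sub>m n"
  shows "lin_indep n {..<n} (\<lambda>j i. P $$ (i,j))"
proof (rule lin_indepI)
  fix \<gamma> l assume zero: "\<And>i. i < n \<Longrightarrow> lincomb {..<n} \<gamma> (\<lambda>j i. P $$ (i,j)) i = 0"
    and l: "l \<in> {..<n}"
  have QP_row: "(\<Sum>i<n. Q $$ (l,i) * P $$ (i,j)) = of_bool (l = j)" if "j < n" for j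
  proof -
    have "(Q * P) $$ (l,j) = (\<Sum>i<n. Q $$ (l,i) * P $$ (i,j))"
      using Q P l that by (simp add: scalar_prod_def lessThan_atLeast0)
    thus ?thesis using QP l that by (cases "l = j") auto
  qed
  have "{..<n} \<inter> {j. l = j} = {l}" using l by auto
  hence "\<gamma> l = (\<Sum>j<n. \<gamma> j * (\<Sum>i<n. Q $$ (l,i) * P $$ (i,j)))"
    using QP_row by simp
  also have "\<dots> = (\<Sum>i<n. Q $$ (l,i) * lincomb {..<n} \<gamma> (\<lambda>j i. P $$ (i,j)) i)"
    unfolding lincomb_def sum_distrib_left by (subst sum.swap) (simp add: mult_ac)
  also have "\<dots> = 0" using zero by simp
  finally show "\<gamma> l = 0" .
qed

lemma similar_diag_mat_eigvec:
  fixes A :: "real mat"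
  assumes A: "A \<in> carrier_mat n n" and wit: "similar_mat_wit A D P Q"
    and D: "D = mat n n (\<lambda>(i,j). if i = j then \<mu> i else 0)" and i: "i < n" and j: "j < n"
  shows "(\<Sum>k<n. A $$ (i,k) * P $$ (k,j)) = \<mu> j * P $$ (i,j)"
proof -
  note w = similar_mat_witD[OF carrier_matD(1)[OF A, symmetric] wit]
  have P: "P \<in> carrier_mat n n" and Q: "Q \<in> carrier_mat n n" and Dc: "D \<in> carrier_mat n n"
    using w by auto
  have "A * P = P * D * (Q * P)"
    using w(3) P Q Dc by (simp add: assoc_mult_mat[of _ n n _ n _ n])
  hence AP: "A * P = P * D" using w(2) P Dc by simp
  have "(\<Sum>k<n. A $$ (i,k) * P $$ (k,j)) = (A * P) $$ (i,j)"
    using A P i j by (simp add: scalar_prod_def lessThan_atLeast0)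
  also have "\<dots> = (\<Sum>k<n. P $$ (i,k) * D $$ (k,j))"
    unfolding AP using P Dc i j by (simp add: scalar_prod_def lessThan_atLeast0)
  also have "\<dots> = (\<Sum>k<n. if k = j then P $$ (i,j) * \<mu> j else 0)"
    using j D by (intro sum.cong refl) auto
  finally show ?thesis using j by simp
qed

locale sym_eigenbasis =
  fixes n :: nat and A :: "real mat" and p :: "nat \<Rightarrow> nat \<Rightarrow> real" and \<mu> :: "nat \<Rightarrow> real"
  assumes sym: "\<And>i j. i < n \<Longrightarrow> j < n \<Longrightarrow> A $$ (i,j) = A $$ (j,i)"
    and eigvec: "\<And>j i. j < n \<Longrightarrow> i < n \<Longrightarrow> (\<Sum>k<n. A $$ (i,k) * p j k) = \<mu> j * p j i"
    and indep: "lin_indep n {..<n} p"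

theorem sym_mat_eigenbasis:
  fixes A :: "real mat"
  assumes A: "A \<in> carrier_mat n n"
    and sym: "\<And>i j. i < n \<Longrightarrow> j < n \<Longrightarrow> A $$ (i,j) = A $$ (j,i)"
  obtains p \<mu> where "sym_eigenbasis n A p \<mu>" "char_poly A = (\<Prod>j<n. [:- \<mu> j, 1:])"
proof -
  obtain es where "char_poly A = (\<Prod>a\<leftarrow>es. [:-a,1:])"
    using sym_mat_char_poly_splits[OF A sym] by blast
  then obtain n_as where jnf: "jordan_nf A n_as" using jordan_nf_exists[OF A] by blast
  have ones: "\<forall>x\<in>set n_as. fst x = 1"
    using sym_mat_jordan_block_size_1[OF A sym jnf] by fastforce
  define \<mu> where "\<mu> j = snd (n_as ! j)" for j
  obtain P Q where wit: "similar_mat_wit A (jordan_matrix n_as) P Q"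
    using jnf unfolding jordan_nf_def similar_mat_def by blast
  note w = similar_mat_witD[OF carrier_matD(1)[OF A, symmetric] wit]
  have len: "length n_as = n"
    using w(5) jordan_matrix_of_size_1_blocks[OF ones] by auto
  have D: "jordan_matrix n_as = mat n n (\<lambda>(i,j). if i = j then \<mu> i else 0)"
    unfolding \<mu>_def len[symmetric] by (rule jordan_matrix_of_size_1_blocks[OF ones])
  have "sym_eigenbasis n A (\<lambda>j i. P $$ (i,j)) \<mu>"
  proof
    show "A $$ (i,j) = A $$ (j,i)" if "i < n" "j < n" for i j using sym that .
    show "(\<Sum>k<n. A $$ (i,k) * P $$ (k,j)) = \<mu> j * P $$ (i,j)" if "j < n" "i < n" for j i
      using similar_diag_mat_eigvec[OF A wit D] that by blast
    show "lin_indep n {..<n} (\<lambda>j i. P $$ (i,j))"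
      using invertible_mat_cols_lin_indep w by blast
  qed
  moreover have "char_poly A = (\<Prod>j<n. [:- \<mu> j, 1:])"
  proof -
    have "char_poly A = char_poly (jordan_matrix n_as)"
      using jnf unfolding jordan_nf_def by (simp add: char_poly_similar)
    also have "\<dots> = (\<Prod>x\<leftarrow>n_as. [:- snd x, 1:])"
      unfolding jordan_matrix_char_poly using ones by (intro arg_cong[where f = prod_list] map_cong) auto
    finally show ?thesis using len unfolding \<mu>_def by (simp add: prod_list_map_nth)
  qed
  ultimately show ?thesis using that by blast
qed

section \<open>Counting eigenvalues with test subspaces\<close>

context sym_eigenbasis
begin

lemma dot_eigvecs_eq_0:
  assumes j: "j < n" and l: "l < n" and ne: "\<mu> j \<noteq> \<mu> l"
  shows "dot n (p j) (p l) = 0"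
proof -
  have "\<mu> l * dot n (p j) (p l) = (\<Sum>i<n. p j i * (\<Sum>k<n. A $$ (i,k) * p l k))"
    unfolding dot_def using eigvec[OF l] by (simp add: sum_distrib_left mult_ac)
  also have "\<dots> = (\<Sum>k<n. \<Sum>i<n. p j i * A $$ (i,k) * p l k)"
    by (subst sum.swap) (simp add: sum_distrib_left mult_ac)
  also have "\<dots> = (\<Sum>k<n. p l k * (\<Sum>i<n. A $$ (k,i) * p j i))"
    by (intro sum.cong refl) (simp add: sum_distrib_left sym mult_ac)
  also have "\<dots> = \<mu> j * dot n (p j) (p l)"
    unfolding dot_def using eigvec[OF j] by (simp add: sum_distrib_left mult_ac)
  finally have "(\<mu> l - \<mu> j) * dot n (p j) (p l) = 0" by (simp add: left_diff_distrib)
  thus ?thesis using ne by simp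
qed

lemma quad_form_lincomb:
  assumes S: "S \<subseteq> {..<n}"
  shows "quad_form n A (lincomb S \<gamma> p)
    = (\<Sum>j\<in>S. \<Sum>l\<in>S. \<gamma> j * \<gamma> l * \<mu> l * dot n (p j) (p l))"
proof -
  have "(\<Sum>k<n. A $$ (i,k) * lincomb S \<gamma> p k) = lincomb S (\<lambda>l. \<gamma> l * \<mu> l) p i"
    if i: "i < n" for i
  proof -
    have "(\<Sum>k<n. A $$ (i,k) * lincomb S \<gamma> p k) = (\<Sum>j\<in>S. \<gamma> j * (\<Sum>k<n. A $$ (i,k) * p j k))"
      unfolding lincomb_def sum_distrib_left by (subst sum.swap) (simp add: mult_ac)
    also have "\<dots> = lincomb S (\<lambda>l. \<gamma> l * \<mu> l) p i"
      unfolding lincomb_def using S i eigvec by (intro sum.cong) (auto simp: mult_ac)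
    finally show ?thesis .
  qed
  hence "quad_form n A (lincomb S \<gamma> p) = dot n (lincomb S \<gamma> p) (lincomb S (\<lambda>l. \<gamma> l * \<mu> l) p)"
    unfolding quad_form_def dot_def by simp
  thus ?thesis unfolding dot_lincomb by (simp add: mult_ac)
qed

lemma quad_form_lincomb_shift:
  assumes "S \<subseteq> {..<n}"
  shows "quad_form n A (lincomb S \<gamma> p) - c * dot n (lincomb S \<gamma> p) (lincomb S \<gamma> p)
    = (\<Sum>j\<in>S. \<Sum>l\<in>S. \<gamma> j * \<gamma> l * (\<mu> l - c) * dot n (p j) (p l))"
  unfolding quad_form_lincomb[OF assms] dot_lincomb
  by (simp add: sum_distrib_left sum_subtractf[symmetric] algebra_simps)

text \<open>The eigenvectors \<open>p j\<close> need not be orthogonal within an eigenspace; the weight \<open>f (\<mu> l)\<close>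
  is constant there, so it can still be split as \<open>sqrt (f (\<mu> j)) * sqrt (f (\<mu> l))\<close>.\<close>

lemma weighted_gram_eq_dot:
  fixes \<gamma> :: "nat \<Rightarrow> real"
  assumes S: "S \<subseteq> {..<n}" and f: "\<And>j. j \<in> S \<Longrightarrow> 0 \<le> f (\<mu> j)"
  defines "u \<equiv> lincomb S (\<lambda>j. sqrt (f (\<mu> j)) * \<gamma> j) p"
  shows "(\<Sum>j\<in>S. \<Sum>l\<in>S. \<gamma> j * \<gamma> l * f (\<mu> l) * dot n (p j) (p l)) = dot n u u"
  unfolding u_def dot_lincomb
proof (intro sum.cong refl)
  fix j l assume j: "j \<in> S" and l: "l \<in> S"
  show "\<gamma> j * \<gamma> l * f (\<mu> l) * dot n (p j) (p l)
      = sqrt (f (\<mu> j)) * \<gamma> j * (sqrt (f (\<mu> l)) * \<gamma> l) * dot n (p j) (p l)"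
  proof (cases "\<mu> j = \<mu> l")
    case True
    hence "sqrt (f (\<mu> j)) * sqrt (f (\<mu> l)) = f (\<mu> l)" using f[OF l] by simp
    thus ?thesis by (metis mult.assoc mult.left_commute)
  next
    case False
    thus ?thesis using dot_eigvecs_eq_0 j l S by auto
  qed
qed

lemma weighted_gram_pos:
  assumes S: "S \<subseteq> {..<n}" and f: "\<And>j. j \<in> S \<Longrightarrow> 0 < f (\<mu> j)"
    and j: "j \<in> S" "\<gamma> j \<noteq> 0"
  shows "0 < (\<Sum>j\<in>S. \<Sum>l\<in>S. \<gamma> j * \<gamma> l * f (\<mu> l) * dot n (p j) (p l))"
proof -
  have "lin_indep n S p" using lin_indep_subset[OF _ indep S] by simp
  moreover have "sqrt (f (\<mu> j)) * \<gamma> j \<noteq> 0" using f[OF j(1)] j(2) by simp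
  ultimately show ?thesis
    using lin_indep_dot_lincomb_pos[OF _ j(1)] weighted_gram_eq_dot[OF S] f
    by (simp add: less_imp_le)
qed

lemma rayleigh_lincomb_ge:
  assumes "S \<subseteq> {..<n}" "\<And>j. j \<in> S \<Longrightarrow> c \<le> \<mu> j"
  shows "c * dot n (lincomb S \<gamma> p) (lincomb S \<gamma> p) \<le> quad_form n A (lincomb S \<gamma> p)"
proof -
  have "0 \<le> (\<Sum>j\<in>S. \<Sum>l\<in>S. \<gamma> j * \<gamma> l * (\<mu> l - c) * dot n (p j) (p l))"
    using weighted_gram_eq_dot[OF assms(1), of "\<lambda>x. x - c" \<gamma>] assms(2) dot_self_nonneg by simp
  thus ?thesis using quad_form_lincomb_shift[OF assms(1), of \<gamma> c] by linarith
qed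

lemma rayleigh_lincomb_gt:
  assumes "S \<subseteq> {..<n}" "\<And>j. j \<in> S \<Longrightarrow> c < \<mu> j" "j \<in> S" "\<gamma> j \<noteq> 0"
  shows "c * dot n (lincomb S \<gamma> p) (lincomb S \<gamma> p) < quad_form n A (lincomb S \<gamma> p)"
proof -
  have "0 < (\<Sum>j\<in>S. \<Sum>l\<in>S. \<gamma> j * \<gamma> l * (\<mu> l - c) * dot n (p j) (p l))"
    using weighted_gram_pos[OF assms(1), of "\<lambda>x. x - c"] assms(2-4) by simp
  thus ?thesis using quad_form_lincomb_shift[OF assms(1), of \<gamma> c] by linarith
qed

lemma rayleigh_lincomb_lt:
  assumes "S \<subseteq> {..<n}" "\<And>j. j \<in> S \<Longrightarrow> \<mu> j < c" "j \<in> S" "\<gamma> j \<noteq> 0"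
  shows "quad_form n A (lincomb S \<gamma> p) < c * dot n (lincomb S \<gamma> p) (lincomb S \<gamma> p)"
proof -
  have "0 < (\<Sum>j\<in>S. \<Sum>l\<in>S. \<gamma> j * \<gamma> l * (c - \<mu> l) * dot n (p j) (p l))"
    using weighted_gram_pos[OF assms(1), of "\<lambda>x. c - x"] assms(2-4) by simp
  also have "\<dots> = - (\<Sum>j\<in>S. \<Sum>l\<in>S. \<gamma> j * \<gamma> l * (\<mu> l - c) * dot n (p j) (p l))"
    by (simp add: sum_negf[symmetric] algebra_simps)
  finally show ?thesis using quad_form_lincomb_shift[OF assms(1), of \<gamma> c] by linarith
qed

lemma dot_eigvec_pos:
  assumes "j < n"
  shows "0 < dot n (p j) (p j)"
proof -
  have "lincomb {j} (\<lambda>_. 1) p = p j" by (simp add: lincomb_def fun_eq_iff)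
  thus ?thesis
    using lin_indep_dot_lincomb_pos[OF lin_indep_subset[OF _ indep], of "{j}" j "\<lambda>_. 1"] assms
    by simp
qed

lemma eigenvalue_le_if_quad_form_le:
  assumes le: "\<And>x. quad_form n A x \<le> c * dot n x x" and j: "j < n"
  shows "\<mu> j \<le> c"
proof -
  have "quad_form n A (p j) = \<mu> j * dot n (p j) (p j)"
    unfolding quad_form_def dot_def using eigvec[OF j] by (simp add: sum_distrib_left mult_ac)
  with le[of "p j"] dot_eigvec_pos[OF j] show ?thesis by simp
qed

lemma card_add_card_le_if_separated:
  fixes v :: "'i \<Rightarrow> nat \<Rightarrow> real" and R :: "real \<Rightarrow> real \<Rightarrow> bool"
  assumes I: "finite I" "lin_indep n I v" and S: "S \<subseteq> {..<n}"
    and R_I: "\<And>\<alpha>. \<exists>j\<in>I. \<alpha> j \<noteq> 0 \<Longrightarrow>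
      R (quad_form n A (lincomb I \<alpha> v)) (dot n (lincomb I \<alpha> v) (lincomb I \<alpha> v))"
    and not_R_S: "\<And>\<beta>. \<exists>j\<in>S. \<beta> j \<noteq> 0 \<Longrightarrow>
      \<not> R (quad_form n A (lincomb S \<beta> p)) (dot n (lincomb S \<beta> p) (lincomb S \<beta> p))"
  shows "card I + card S \<le> n"
proof (rule ccontr)
  assume "\<not> ?thesis"
  hence card: "n < card I + card S" by simp
  have "finite S" using S finite_subset by blast
  moreover have "lin_indep n S p" using lin_indep_subset[OF _ indep S] by simp
  ultimately obtain \<alpha> \<beta> where ab: "\<exists>j\<in>I. \<alpha> j \<noteq> 0" "\<exists>j\<in>S. \<beta> j \<noteq> 0"
    and eq: "\<And>i. i < n \<Longrightarrow> lincomb I \<alpha> v i = lincomb S \<beta> p i"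
    using common_nonzero_lincomb[OF I _ _ card] by blast
  have "quad_form n A (lincomb I \<alpha> v) = quad_form n A (lincomb S \<beta> p)"
    by (rule quad_form_cong) (rule eq)
  moreover have "dot n (lincomb I \<alpha> v) (lincomb I \<alpha> v) = dot n (lincomb S \<beta> p) (lincomb S \<beta> p)"
    by (rule dot_cong) (rule eq)
  ultimately show False using R_I[OF ab(1)] not_R_S[OF ab(2)] by simp
qed

lemma card_le_card_eigenvalues_ge:
  fixes v :: "'i \<Rightarrow> nat \<Rightarrow> real"
  assumes "finite I" "lin_indep n I v"
    and ge: "\<And>\<alpha>. c * dot n (lincomb I \<alpha> v) (lincomb I \<alpha> v) \<le> quad_form n A (lincomb I \<alpha> v)"
  shows "card I \<le> card {j. j < n \<and> c \<le> \<mu> j}"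
proof -
  let ?S = "{j. j < n \<and> \<mu> j < c}"
  have "card I + card ?S \<le> n"
  proof (rule card_add_card_le_if_separated[OF assms(1,2), where R = "\<lambda>q s. c * s \<le> q"])
    fix \<beta> :: "nat \<Rightarrow> real" assume "\<exists>j\<in>?S. \<beta> j \<noteq> 0"
    then obtain j where "j \<in> ?S" "\<beta> j \<noteq> 0" by blast
    hence "quad_form n A (lincomb ?S \<beta> p) < c * dot n (lincomb ?S \<beta> p) (lincomb ?S \<beta> p)"
      by (intro rayleigh_lincomb_lt) auto
    thus "\<not> c * dot n (lincomb ?S \<beta> p) (lincomb ?S \<beta> p) \<le> quad_form n A (lincomb ?S \<beta> p)"
      by simp
  qed (use ge in auto)
  moreover have "card ?S + card {j. j < n \<and> c \<le> \<mu> j} = n"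
  proof -
    have "{..<n} = ?S \<union> {j. j < n \<and> c \<le> \<mu> j}" by auto
    hence "n = card (?S \<union> {j. j < n \<and> c \<le> \<mu> j})" by (metis card_lessThan)
    thus ?thesis by (subst (asm) card_Un_disjoint) auto
  qed
  ultimately show ?thesis by linarith
qed

lemma card_add_card_eigenvalues_ge_le:
  fixes v :: "'i \<Rightarrow> nat \<Rightarrow> real"
  assumes "finite I" "lin_indep n I v"
    and "\<And>\<alpha>. \<exists>j\<in>I. \<alpha> j \<noteq> 0 \<Longrightarrow>
      quad_form n A (lincomb I \<alpha> v) < c * dot n (lincomb I \<alpha> v) (lincomb I \<alpha> v)"
  shows "card I + card {j. j < n \<and> c \<le> \<mu> j} \<le> n"
proof (rule card_add_card_le_if_separated[OF assms(1,2), where R = "\<lambda>q s. q < c * s"])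
  let ?S = "{j. j < n \<and> c \<le> \<mu> j}"
  fix \<beta> :: "nat \<Rightarrow> real"
  have "c * dot n (lincomb ?S \<beta> p) (lincomb ?S \<beta> p) \<le> quad_form n A (lincomb ?S \<beta> p)"
    by (intro rayleigh_lincomb_ge) auto
  thus "\<not> quad_form n A (lincomb ?S \<beta> p) < c * dot n (lincomb ?S \<beta> p) (lincomb ?S \<beta> p)"
    by simp
qed (use assms(3) in auto)

lemma card_add_card_eigenvalues_gt_le:
  fixes v :: "'i \<Rightarrow> nat \<Rightarrow> real"
  assumes "finite I" "lin_indep n I v"
    and "\<And>\<alpha>. quad_form n A (lincomb I \<alpha> v) \<le> c * dot n (lincomb I \<alpha> v) (lincomb I \<alpha> v)"
  shows "card I + card {j. j < n \<and> c < \<mu> j} \<le> n"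
proof (rule card_add_card_le_if_separated[OF assms(1,2), where R = "\<lambda>q s. q \<le> c * s"])
  let ?S = "{j. j < n \<and> c < \<mu> j}"
  fix \<beta> :: "nat \<Rightarrow> real" assume "\<exists>j\<in>?S. \<beta> j \<noteq> 0"
  then obtain j where "j \<in> ?S" "\<beta> j \<noteq> 0" by blast
  hence "c * dot n (lincomb ?S \<beta> p) (lincomb ?S \<beta> p) < quad_form n A (lincomb ?S \<beta> p)"
    by (intro rayleigh_lincomb_gt) auto
  thus "\<not> quad_form n A (lincomb ?S \<beta> p) \<le> c * dot n (lincomb ?S \<beta> p) (lincomb ?S \<beta> p)"
    by simp
qed (use assms(3) in auto)

end

section \<open>Laplacian quadratic forms\<close>

lemma laplacian_quad_form:
  assumes symm: "\<And>i j. adj i j = adj j i" and irr: "\<And>i. \<not> adj i i"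
  shows "quad_form n (laplacian n adj) x
    = (\<Sum>i<n. \<Sum>j<n. if adj i j then (x i - x j)\<^sup>2 else 0) / 2"
proof -
  have row: "(\<Sum>k<n. laplacian n adj $$ (i,k) * x k) = (\<Sum>k<n. if adj i k then x i - x k else 0)"
    if i: "i < n" for i
  proof -
    have "(\<Sum>k<n. laplacian n adj $$ (i,k) * x k)
        = (\<Sum>k<n. (if k = i then real (card {k. k < n \<and> adj i k}) * x i else 0)
                   - (if adj i k then x k else 0))"
      using i irr by (intro sum.cong refl) (auto simp: laplacian_def)
    also have "\<dots> = real (card {k. k < n \<and> adj i k}) * x i - (\<Sum>k<n. if adj i k then x k else 0)"
      using i by (simp add: sum_subtractf)
    also have "real (card {k. k < n \<and> adj i k}) * x i = (\<Sum>k<n. if adj i k then x i else 0)"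
      by (simp add: sum.inter_filter[symmetric])
    also have "(\<Sum>k<n. if adj i k then x i else 0) - (\<Sum>k<n. if adj i k then x k else 0)
        = (\<Sum>k<n. if adj i k then x i - x k else 0)"
      unfolding sum_subtractf[symmetric] by (intro sum.cong) auto
    finally show ?thesis .
  qed
  have "quad_form n (laplacian n adj) x
      = (\<Sum>i<n. \<Sum>j<n. if adj i j then x i * x i - x i * x j else 0)"
    unfolding quad_form_def using row
    by (simp add: sum_distrib_left if_distrib[of "\<lambda>y. x _ * y"] right_diff_distrib cong: if_cong)
  moreover have "(\<Sum>i<n. \<Sum>j<n. if adj i j then x j * x j - x i * x j else 0)
      = (\<Sum>i<n. \<Sum>j<n. if adj i j then x i * x i - x i * x j else 0)"
  proof -
    have "(if adj j i then x i * x i - x j * x i else 0) = (if adj i j then x i * x i - x i * x j else 0)"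
      for i j using symm[of j i] by (simp add: mult.commute)
    thus ?thesis by (subst sum.swap) (intro sum.cong refl)
  qed
  moreover have "(\<Sum>i<n. \<Sum>j<n. if adj i j then (x i - x j)\<^sup>2 else 0)
      = (\<Sum>i<n. \<Sum>j<n. if adj i j then x i * x i - x i * x j else 0)
        + (\<Sum>i<n. \<Sum>j<n. if adj i j then x j * x j - x i * x j else 0)"
    unfolding sum.distrib[symmetric] by (intro sum.cong refl) (simp add: power2_eq_square algebra_simps)
  ultimately show ?thesis by linarith
qed

lemma laplacian_quad_form_le:
  assumes symm: "\<And>i j. adj i j = adj j i" and irr: "\<And>i. \<not> adj i i"
  shows "quad_form n (laplacian n adj) x \<le> real n * dot n x x"
proof -
  have "(\<Sum>i<n. \<Sum>j<n. if adj i j then (x i - x j)\<^sup>2 else 0) \<le> (\<Sum>i<n. \<Sum>j<n. (x i - x j)\<^sup>2)"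
    by (intro sum_mono) auto
  also have "\<dots> = 2 * real n * dot n x x - 2 * (\<Sum>i<n. x i)\<^sup>2"
    by (simp add: power2_eq_square algebra_simps sum.distrib sum_subtractf sum_distrib_left
        sum_product dot_def)
  also have "\<dots> \<le> 2 * real n * dot n x x" by simp
  finally show ?thesis unfolding laplacian_quad_form[OF symm irr] by simp
qed

lemma laplacian_quad_form_ge_on:
  assumes symm: "\<And>i j. adj i j = adj j i" and irr: "\<And>i. \<not> adj i i" and U: "U \<subseteq> {..<n}"
  shows "(\<Sum>i\<in>U. \<Sum>j\<in>U. if adj i j then (x i - x j)\<^sup>2 else 0) / 2
    \<le> quad_form n (laplacian n adj) x"
proof -
  let ?f = "\<lambda>i j. if adj i j then (x i - x j)\<^sup>2 else 0"
  have "(\<Sum>i\<in>U. \<Sum>j\<in>U. ?f i j) \<le> (\<Sum>i\<in>U. \<Sum>j<n. ?f i j)"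
    using U by (intro sum_mono sum_mono2) auto
  also have "\<dots> \<le> (\<Sum>i<n. \<Sum>j<n. ?f i j)"
    using U by (intro sum_mono2) (auto intro: sum_nonneg)
  finally show ?thesis unfolding laplacian_quad_form[OF symm irr] by simp
qed

lemma sum_sum_sq_diff:
  fixes w :: "'a \<Rightarrow> real"
  shows "(\<Sum>u\<in>K. \<Sum>v\<in>K. (w u - w v)\<^sup>2)
    = 2 * real (card K) * (\<Sum>u\<in>K. (w u)\<^sup>2) - 2 * (\<Sum>u\<in>K. w u)\<^sup>2"
  by (simp add: power2_eq_square algebra_simps sum.distrib sum_subtractf sum_distrib_left
      sum_product)

lemma sum_sq_diff_const:
  fixes w :: "'a \<Rightarrow> real"
  shows "(\<Sum>u\<in>K. (w u - y)\<^sup>2) = (\<Sum>u\<in>K. (w u)\<^sup>2) - 2 * y * (\<Sum>u\<in>K. w u) + real (card K) * y\<^sup>2"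
proof -
  have "(\<Sum>u\<in>K. (w u - y)\<^sup>2) = (\<Sum>u\<in>K. (w u)\<^sup>2 - 2 * y * w u + y\<^sup>2)"
    by (intro sum.cong) (simp_all add: power2_eq_square algebra_simps)
  thus ?thesis by (simp add: sum.distrib sum_subtractf sum_distrib_left)
qed

lemma path_form_identity:
  fixes y :: "nat \<Rightarrow> real"
  assumes "lo \<le> hi"
  shows "(m + 2) * (\<Sum>i=lo..hi. (y i)\<^sup>2) - (\<Sum>i=lo..<hi. (y i - y (Suc i))\<^sup>2) - m * (y hi)\<^sup>2
    = (m - 2) * (\<Sum>i=lo..<hi. (y i)\<^sup>2) + 2 * (y lo)\<^sup>2 + (\<Sum>i=lo..<hi. (y i + y (Suc i))\<^sup>2)"
  using assms
proof (induct hi rule: dec_induct)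
  case base
  show ?case by (simp add: algebra_simps)
next
  case (step hi)
  thus ?case by (simp add: power2_eq_square algebra_simps)
qed

lemma path_form_le:
  fixes y :: "nat \<Rightarrow> real"
  assumes "2 \<le> m" "lo \<le> hi"
  shows "(\<Sum>i=lo..<hi. (y i - y (Suc i))\<^sup>2) + m * (y hi)\<^sup>2 \<le> (m + 2) * (\<Sum>i=lo..hi. (y i)\<^sup>2)"
proof -
  have "0 \<le> (m - 2) * (\<Sum>i=lo..<hi. (y i)\<^sup>2) + 2 * (y lo)\<^sup>2 + (\<Sum>i=lo..<hi. (y i + y (Suc i))\<^sup>2)"
    using assms(1) by (intro add_nonneg_nonneg mult_nonneg_nonneg sum_nonneg) auto
  thus ?thesis using path_form_identity[OF assms(2), of m y] by linarith
qed

lemma path_form_less: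
  fixes y :: "nat \<Rightarrow> real"
  assumes "2 \<le> m" "lo \<le> k" "k \<le> hi" "y k \<noteq> 0"
  shows "(\<Sum>i=lo..<hi. (y i - y (Suc i))\<^sup>2) + m * (y hi)\<^sup>2 < (m + 2) * (\<Sum>i=lo..hi. (y i)\<^sup>2)"
proof -
  let ?alt = "\<Sum>i=lo..<hi. (y i + y (Suc i))\<^sup>2"
  have "0 < 2 * (y lo)\<^sup>2 + ?alt"
  proof (rule ccontr)
    assume "\<not> ?thesis"
    moreover have "0 \<le> ?alt" by (intro sum_nonneg) auto
    moreover have "0 \<le> (y lo)\<^sup>2" by simp
    ultimately have "(y lo)\<^sup>2 = 0" and alt0: "?alt = 0" by linarith+
    hence "y lo = 0" by simp
    have alt: "y (Suc i) = - y i" if "lo \<le> i" "i < hi" for i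
    proof -
      have "(y i + y (Suc i))\<^sup>2 = 0" using alt0 that by (subst (asm) sum_nonneg_eq_0_iff) auto
      thus ?thesis by (simp add: add_eq_0_iff)
    qed
    have "y i = 0" if "lo \<le> i" "i \<le> hi" for i
      using that
    proof (induct i rule: dec_induct)
      case base
      show ?case using \<open>y lo = 0\<close> .
    next
      case (step i)
      thus ?case using alt[of i] by simp
    qed
    with assms(2-4) show False by blast
  qed
  moreover have "0 \<le> (m - 2) * (\<Sum>i=lo..<hi. (y i)\<^sup>2)"
    using assms(1) by (intro mult_nonneg_nonneg sum_nonneg) auto
  ultimately show ?thesis using path_form_identity[of lo hi m y] assms(2,3) by linarith
qed

lemma path_sums_reflect:
  fixes y :: "nat \<Rightarrow> real"
  assumes "lo \<le> hi"
  shows "(\<Sum>i=lo..<hi. (y (lo + hi - i) - y (lo + hi - Suc i))\<^sup>2) = (\<Sum>i=lo..<hi. (y i - y (Suc i))\<^sup>2)"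
    and "(\<Sum>i=lo..hi. (y (lo + hi - i))\<^sup>2) = (\<Sum>i=lo..hi. (y i)\<^sup>2)"
proof -
  have "(\<Sum>i=lo..<hi. (y i - y (Suc i))\<^sup>2) = (\<Sum>i=lo..<hi. (y (hi + lo - Suc i) - y (Suc (hi + lo - Suc i)))\<^sup>2)"
    by (rule sum.atLeastLessThan_rev)
  also have "\<dots> = (\<Sum>i=lo..<hi. (y (lo + hi - i) - y (lo + hi - Suc i))\<^sup>2)"
    by (intro sum.cong refl) (auto simp: power2_commute Suc_diff_Suc add.commute)
  finally show "(\<Sum>i=lo..<hi. (y (lo + hi - i) - y (lo + hi - Suc i))\<^sup>2) = (\<Sum>i=lo..<hi. (y i - y (Suc i))\<^sup>2)" ..
  show "(\<Sum>i=lo..hi. (y (lo + hi - i))\<^sup>2) = (\<Sum>i=lo..hi. (y i)\<^sup>2)"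
    using sum.atLeastAtMost_rev[of "\<lambda>i. (y i)\<^sup>2" lo hi] by (simp add: add.commute)
qed

lemma path_form_le_rev:
  fixes y :: "nat \<Rightarrow> real"
  assumes "2 \<le> m" "lo \<le> hi"
  shows "(\<Sum>i=lo..<hi. (y i - y (Suc i))\<^sup>2) + m * (y lo)\<^sup>2 \<le> (m + 2) * (\<Sum>i=lo..hi. (y i)\<^sup>2)"
  using path_form_le[OF assms, of "\<lambda>i. y (lo + hi - i)"] path_sums_reflect[OF assms(2), of y]
  by (simp add: Suc_diff_Suc)

lemma path_form_less_rev:
  fixes y :: "nat \<Rightarrow> real"
  assumes "2 \<le> m" "lo \<le> k" "k \<le> hi" "y k \<noteq> 0"
  shows "(\<Sum>i=lo..<hi. (y i - y (Suc i))\<^sup>2) + m * (y lo)\<^sup>2 < (m + 2) * (\<Sum>i=lo..hi. (y i)\<^sup>2)"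
proof -
  have "lo \<le> lo + hi - k" "lo + hi - k \<le> hi" "y (lo + hi - (lo + hi - k)) \<noteq> 0"
    using assms(2-4) by auto
  from path_form_less[where y = "\<lambda>i. y (lo + hi - i)" and k = "lo + hi - k", OF assms(1) this]
  show ?thesis
    using path_sums_reflect[of lo hi y] assms(2,3) by (simp add: Suc_diff_Suc)
qed

lemma sum_path_pairs:
  fixes f :: "nat \<Rightarrow> nat \<Rightarrow> real"
  assumes "\<And>i j. f i j = f j i"
  shows "(\<Sum>i\<le>d. \<Sum>j\<le>d. if j = Suc i \<or> i = Suc j then f i j else 0) = 2 * (\<Sum>i<d. f i (Suc i))"
proof -
  have succ: "(\<Sum>i\<le>d. \<Sum>j\<le>d. if j = Suc i then f i j else 0) = (\<Sum>i<d. f i (Suc i))"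
  proof -
    have "(\<Sum>i\<le>d. \<Sum>j\<le>d. if j = Suc i then f i j else 0) = (\<Sum>i\<le>d. if Suc i \<le> d then f i (Suc i) else 0)"
      by (intro sum.cong refl) (simp add: sum.delta)
    also have "\<dots> = (\<Sum>i\<in>{i \<in> {..d}. Suc i \<le> d}. f i (Suc i))"
      by (rule sum.inter_filter[symmetric]) simp
    also have "{i \<in> {..d}. Suc i \<le> d} = {..<d}" by auto
    finally show ?thesis .
  qed
  have "(\<Sum>i\<le>d. \<Sum>j\<le>d. if j = Suc i \<or> i = Suc j then f i j else 0)
      = (\<Sum>i\<le>d. \<Sum>j\<le>d. if j = Suc i then f i j else 0) + (\<Sum>i\<le>d. \<Sum>j\<le>d. if i = Suc j then f i j else 0)"
    unfolding sum.distrib[symmetric] by (intro sum.cong refl) auto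
  also have "(\<Sum>i\<le>d. \<Sum>j\<le>d. if i = Suc j then f i j else 0) = (\<Sum>i\<le>d. \<Sum>j\<le>d. if j = Suc i then f i j else 0)"
    by (subst sum.swap, intro sum.cong refl) (simp add: assms)
  finally show ?thesis using succ by simp
qed

section \<open>Sorted spectra\<close>

lemma proots_prod_linear:
  fixes \<mu> :: "nat \<Rightarrow> real"
  shows "proots (\<Prod>j<n. [:- \<mu> j, 1:]) = image_mset \<mu> (mset_set {..<n})"
proof (induct n)
  case (Suc n)
  have "proots (\<Prod>j<Suc n. [:- \<mu> j, 1:]) = proots ((\<Prod>j<n. [:- \<mu> j, 1:]) * [:- \<mu> n, 1:])"
    by simp
  also have "\<dots> = proots (\<Prod>j<n. [:- \<mu> j, 1:]) + proots [:- \<mu> n, 1:]"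
    by (rule proots_mult) simp_all
  finally show ?case using Suc by (simp add: lessThan_Suc)
qed simp

lemma size_filter_image_mset_set:
  "finite A \<Longrightarrow> size {#x \<in># image_mset f (mset_set A). P x#} = card {a \<in> A. P (f a)}"
  by (simp add: image_mset_filter_mset_swap[symmetric])

lemma sorted_nth_ge_if_card_ge:
  fixes zs :: "'a :: linorder list"
  assumes "sorted zs" "r < length zs" "length zs - Suc r < card {i. i < length zs \<and> a \<le> zs ! i}"
  shows "a \<le> zs ! r"
proof (rule ccontr)
  assume less: "\<not> a \<le> zs ! r"
  have "{i. i < length zs \<and> a \<le> zs ! i} \<subseteq> {r<..<length zs}"
  proof
    fix i assume i: "i \<in> {i. i < length zs \<and> a \<le> zs ! i}"
    have "\<not> i \<le> r"
      using sorted_nth_mono[OF assms(1), of i r] i less assms(2) by (auto dest: order_trans)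
    with i show "i \<in> {r<..<length zs}" by simp
  qed
  hence "card {i. i < length zs \<and> a \<le> zs ! i} \<le> length zs - Suc r"
    by (metis card_greaterThanLessThan card_mono finite_greaterThanLessThan)
  with assms(3) show False by simp
qed

lemma sorted_nth_le_if_card_less:
  fixes zs :: "'a :: linorder list"
  assumes "sorted zs" "r < length zs" "card {i. i < length zs \<and> a < zs ! i} < length zs - r"
  shows "zs ! r \<le> a"
proof (rule ccontr)
  assume greater: "\<not> zs ! r \<le> a"
  have "{r..<length zs} \<subseteq> {i. i < length zs \<and> a < zs ! i}"
  proof
    fix i assume i: "i \<in> {r..<length zs}"
    hence "zs ! r \<le> zs ! i" using sorted_nth_mono[OF assms(1)] by simp
    with i greater show "i \<in> {i. i < length zs \<and> a < zs ! i}"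
      by (auto simp: not_le intro: less_le_trans)
  qed
  hence "length zs - r \<le> card {i. i < length zs \<and> a < zs ! i}"
    by (metis card_atLeastLessThan card_mono finite_Collect_conjI finite_Collect_less_nat)
  with assms(3) show False by simp
qed

lemma nth_largest_eq:
  fixes M :: "real multiset"
  assumes ge: "size {#x \<in># M. a \<le> x#} = m" and gt: "size {#x \<in># M. a < x#} < m" and m: "1 \<le> m"
  shows "rev (sorted_list_of_multiset M) ! (m - 1) = a"
proof -
  define zs where "zs = sorted_list_of_multiset M"
  have count: "card {i. i < length zs \<and> P (zs ! i)} = size {#x \<in># M. P x#}" for P
    unfolding zs_def
    by (metis length_filter_conv_card mset_filter mset_sorted_list_of_multiset size_mset)
  have "length zs = size M" unfolding zs_def by (metis mset_sorted_list_of_multiset size_mset)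
  hence m_le: "m \<le> length zs" using ge size_filter_mset_lesseq[of "\<lambda>x. a \<le> x" M] by simp
  define r where "r = length zs - m"
  have r: "r < length zs" using m m_le unfolding r_def by simp
  have sorted: "sorted zs" unfolding zs_def by simp
  have "rev zs ! (m - 1) = zs ! r"
    using m m_le unfolding r_def by (simp add: rev_nth Suc_diff_Suc)
  also have "zs ! r = a"
  proof (rule antisym)
    show "zs ! r \<le> a"
      using sorted_nth_le_if_card_less[OF sorted r] count[of "\<lambda>x. a < x"] gt m_le
      unfolding r_def by simp
    show "a \<le> zs ! r"
      using sorted_nth_ge_if_card_ge[OF sorted r] count[of "\<lambda>x. a \<le> x"] ge m m_le
      unfolding r_def by simp
  qed
  finally show ?thesis unfolding zs_def .
qed

section \<open>The graph G_{n,d,t}\<close>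

locale ndt_graph =
  fixes n d t :: nat
  assumes d2: "2 \<le> d" and dn: "d + 2 \<le> n" and t2: "2 \<le> t" and td: "t \<le> d"
begin

text \<open>Vertex i \<le> d is the path vertex v_{i+1}; K is the clique K_{n-d-1} and H consists of the
  path vertices v_{t-1}, v_t, v_{t+1} joined to it.\<close>

abbreviation "G \<equiv> G_ndt n d t"
abbreviation "K \<equiv> {d<..<n}"
abbreviation "H \<equiv> {t - 2, t - 1, t}"

lemma G_sym: "G i j = G j i"
  unfolding G_ndt_def by auto

lemma G_irrefl: "\<not> G i i"
  unfolding G_ndt_def by auto

lemma G_path: "i \<le> d \<Longrightarrow> j \<le> d \<Longrightarrow> G i j \<longleftrightarrow> j = Suc i \<or> i = Suc j"
  unfolding G_ndt_def using dn by auto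

lemma G_path_clique: "i \<le> d \<Longrightarrow> j \<in> K \<Longrightarrow> G i j \<longleftrightarrow> i \<in> H"
  unfolding G_ndt_def by auto

lemma G_clique: "i \<in> K \<Longrightarrow> j \<in> K \<Longrightarrow> G i j \<longleftrightarrow> i \<noteq> j"
  unfolding G_ndt_def by auto

lemma real_card_K: "real (card K) = real n - real d - 1"
  using dn by (simp add: of_nat_diff)

lemma sum_H: "(\<Sum>h\<in>H. g h) = g (t - 2) + g (t - 1) + g t"
proof -
  have "t - 2 \<noteq> t - 1" "t - 2 \<noteq> t" "t - 1 \<noteq> t" using t2 by auto
  thus ?thesis by (simp add: add.assoc)
qed

lemma sum_lessThan_split: "(\<Sum>i<n. g i) = (\<Sum>i\<le>d. g i) + (\<Sum>i\<in>K. g i)"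
proof -
  have "{..<n} = {..d} \<union> K" using dn by auto
  thus ?thesis by (simp add: sum.union_disjoint ivl_disj_int)
qed

lemma quad_form_G:
  "quad_form n (laplacian n G) w = (\<Sum>i<d. (w i - w (Suc i))\<^sup>2)
    + (\<Sum>u\<in>K. \<Sum>h\<in>H. (w u - w h)\<^sup>2) + (\<Sum>u\<in>K. \<Sum>v\<in>K. (w u - w v)\<^sup>2) / 2"
proof -
  define F where "F i j = (if G i j then (w i - w j)\<^sup>2 else 0)" for i j
  have F_sym: "F i j = F j i" for i j by (simp add: F_def G_sym power2_commute)
  have path: "(\<Sum>i\<le>d. \<Sum>j\<le>d. F i j) = 2 * (\<Sum>i<d. (w i - w (Suc i))\<^sup>2)"
  proof -
    have "(\<Sum>i\<le>d. \<Sum>j\<le>d. F i j)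
        = (\<Sum>i\<le>d. \<Sum>j\<le>d. if j = Suc i \<or> i = Suc j then (w i - w j)\<^sup>2 else 0)"
      unfolding F_def by (intro sum.cong refl) (simp add: G_path)
    also have "\<dots> = 2 * (\<Sum>i<d. (w i - w (Suc i))\<^sup>2)"
      by (rule sum_path_pairs) (simp add: power2_commute)
    finally show ?thesis .
  qed
  have path_clique: "(\<Sum>i\<le>d. \<Sum>j\<in>K. F i j) = (\<Sum>u\<in>K. \<Sum>h\<in>H. (w u - w h)\<^sup>2)"
  proof -
    have "(\<Sum>i\<le>d. \<Sum>j\<in>K. F i j) = (\<Sum>i\<le>d. if i \<in> H then (\<Sum>j\<in>K. (w i - w j)\<^sup>2) else 0)"
      unfolding F_def by (intro sum.cong refl) (auto simp: G_path_clique)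
    also have "\<dots> = (\<Sum>h\<in>{..d} \<inter> H. \<Sum>j\<in>K. (w h - w j)\<^sup>2)"
      by (rule sum.inter_restrict[symmetric]) simp
    also have "{..d} \<inter> H = H" using td by auto
    finally show ?thesis by (subst sum.swap) (simp add: power2_commute)
  qed
  have clique_path: "(\<Sum>i\<in>K. \<Sum>j\<le>d. F i j) = (\<Sum>i\<le>d. \<Sum>j\<in>K. F i j)"
    by (subst sum.swap) (simp add: F_sym)
  have clique: "(\<Sum>i\<in>K. \<Sum>j\<in>K. F i j) = (\<Sum>u\<in>K. \<Sum>v\<in>K. (w u - w v)\<^sup>2)"
    unfolding F_def by (intro sum.cong refl) (auto simp: G_clique)
  have "quad_form n (laplacian n G) w = (\<Sum>i<n. \<Sum>j<n. F i j) / 2"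
    unfolding F_def by (rule laplacian_quad_form[OF G_sym G_irrefl])
  also have "(\<Sum>i<n. \<Sum>j<n. F i j) = (\<Sum>i\<le>d. \<Sum>j\<le>d. F i j) + (\<Sum>i\<le>d. \<Sum>j\<in>K. F i j)
      + ((\<Sum>i\<in>K. \<Sum>j\<le>d. F i j) + (\<Sum>i\<in>K. \<Sum>j\<in>K. F i j))"
    by (simp add: sum_lessThan_split sum.distrib)
  finally show ?thesis unfolding path path_clique clique_path clique by simp
qed

lemma sum_path_split:
  fixes g :: "nat \<Rightarrow> real"
  shows "(\<Sum>i<d. g i) = (\<Sum>i=0..<t-2. g i) + g (t - 2) + g (t - 1) + (\<Sum>i=t..<d. g i)"
proof -
  have "(\<Sum>i<d. g i) = (\<Sum>i=0..<t-2. g i) + (\<Sum>i=t-2..<d. g i)"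
    using td by (simp add: atLeast0LessThan[symmetric] sum.atLeastLessThan_concat)
  also have "(\<Sum>i=t-2..<d. g i) = g (t - 2) + g (t - 1) + (\<Sum>i=t..<d. g i)"
  proof -
    have "Suc (t - 2) = t - 1" "Suc (t - 1) = t" using t2 by auto
    thus ?thesis using t2 td by (simp add: sum.atLeast_Suc_lessThan add.assoc)
  qed
  finally show ?thesis by (simp add: add.assoc)
qed

lemma dot_split:
  "dot n w w = (\<Sum>i=0..t-2. (w i)\<^sup>2) + (w (t - 1))\<^sup>2 + (\<Sum>i=t..d. (w i)\<^sup>2) + (\<Sum>u\<in>K. (w u)\<^sup>2)"
proof -
  have "{..d} = {0..t-2} \<union> {t - 1} \<union> {t..d}" using t2 td by auto
  moreover have "{0..t-2} \<inter> {t - 1} = {}" "({0..t-2} \<union> {t - 1}) \<inter> {t..d} = {}" using t2 by auto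
  ultimately have "(\<Sum>i\<le>d. (w i)\<^sup>2) = (\<Sum>i=0..t-2. (w i)\<^sup>2) + (w (t - 1))\<^sup>2 + (\<Sum>i=t..d. (w i)\<^sup>2)"
    by (simp add: sum.union_disjoint)
  thus ?thesis unfolding dot_def power2_eq_square[symmetric] sum_lessThan_split by simp
qed

lemma quad_form_G_balanced:
  assumes bal: "(\<Sum>u\<in>K. w u) + w (t - 1) = 0"
  shows "quad_form n (laplacian n G) w
    = ((\<Sum>i=0..<t-2. (w i - w (Suc i))\<^sup>2) + (real n - real d) * (w (t - 2))\<^sup>2)
      + ((\<Sum>i=t..<d. (w i - w (Suc i))\<^sup>2) + (real n - real d) * (w t)\<^sup>2)
      + (real n - real d + 2) * ((w (t - 1))\<^sup>2 + (\<Sum>u\<in>K. (w u)\<^sup>2))"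
proof -
  have s: "(\<Sum>u\<in>K. w u) = - w (t - 1)" using bal by simp
  have "Suc (t - 2) = t - 1" "Suc (t - 1) = t" using t2 by auto
  hence path: "(\<Sum>i<d. (w i - w (Suc i))\<^sup>2) = (\<Sum>i=0..<t-2. (w i - w (Suc i))\<^sup>2)
      + (w (t - 2) - w (t - 1))\<^sup>2 + (w (t - 1) - w t)\<^sup>2 + (\<Sum>i=t..<d. (w i - w (Suc i))\<^sup>2)"
    using sum_path_split[of "\<lambda>i. (w i - w (Suc i))\<^sup>2"] by simp
  define W where "W = (\<Sum>u\<in>K. (w u)\<^sup>2)"
  have clique: "(\<Sum>u\<in>K. \<Sum>v\<in>K. (w u - w v)\<^sup>2) / 2 = (real n - real d - 1) * W - (w (t - 1))\<^sup>2"
    using sum_sum_sq_diff[of w K] unfolding real_card_K s W_def by simp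
  have hubs: "(\<Sum>u\<in>K. \<Sum>h\<in>H. (w u - w h)\<^sup>2) = 3 * W + 2 * w (t - 1) * (w (t - 2) + w (t - 1) + w t)
      + (real n - real d - 1) * ((w (t - 2))\<^sup>2 + (w (t - 1))\<^sup>2 + (w t)\<^sup>2)"
    unfolding sum_H sum.distrib sum_sq_diff_const real_card_K s W_def by (simp add: algebra_simps)
  show ?thesis
    unfolding quad_form_G path hubs clique W_def[symmetric] by (simp add: power2_eq_square algebra_simps)
qed

lemma quad_form_G_le_balanced:
  assumes bal: "(\<Sum>u\<in>K. w u) + w (t - 1) = 0"
  shows "quad_form n (laplacian n G) w \<le> (real n - real d + 2) * dot n w w"
proof -
  have m: "2 \<le> real n - real d" using dn by simp
  have "(\<Sum>i=0..<t-2. (w i - w (Suc i))\<^sup>2) + (real n - real d) * (w (t - 2))\<^sup>2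
      \<le> (real n - real d + 2) * (\<Sum>i=0..t-2. (w i)\<^sup>2)"
    by (rule path_form_le[OF m]) simp
  moreover have "(\<Sum>i=t..<d. (w i - w (Suc i))\<^sup>2) + (real n - real d) * (w t)\<^sup>2
      \<le> (real n - real d + 2) * (\<Sum>i=t..d. (w i)\<^sup>2)"
    by (rule path_form_le_rev[OF m td])
  ultimately show ?thesis
    unfolding quad_form_G_balanced[OF bal] dot_split by (simp add: algebra_simps)
qed

lemma quad_form_G_less_on_path:
  assumes K0: "\<And>u. u \<in> K \<Longrightarrow> w u = 0" and hub0: "w (t - 1) = 0"
    and j: "j \<le> d" "j \<noteq> t - 1" "w j \<noteq> 0"
  shows "quad_form n (laplacian n G) w < (real n - real d + 2) * dot n w w"
proof -
  have m: "2 \<le> real n - real d" using dn by simp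
  have bal: "(\<Sum>u\<in>K. w u) + w (t - 1) = 0" using K0 hub0 by simp
  let ?left = "(\<Sum>i=0..<t-2. (w i - w (Suc i))\<^sup>2) + (real n - real d) * (w (t - 2))\<^sup>2"
  let ?right = "(\<Sum>i=t..<d. (w i - w (Suc i))\<^sup>2) + (real n - real d) * (w t)\<^sup>2"
  have left: "?left \<le> (real n - real d + 2) * (\<Sum>i=0..t-2. (w i)\<^sup>2)"
    by (rule path_form_le[OF m]) simp
  have right: "?right \<le> (real n - real d + 2) * (\<Sum>i=t..d. (w i)\<^sup>2)"
    by (rule path_form_le_rev[OF m td])
  have "?left < (real n - real d + 2) * (\<Sum>i=0..t-2. (w i)\<^sup>2)
      \<or> ?right < (real n - real d + 2) * (\<Sum>i=t..d. (w i)\<^sup>2)"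
  proof (cases "j \<le> t - 2")
    case True
    thus ?thesis using path_form_less[where y = w and hi = "t - 2", OF m le0 True j(3)] by simp
  next
    case False
    hence tj: "t \<le> j" using j(2) by simp
    show ?thesis using path_form_less_rev[where y = w and lo = t, OF m tj j(1,3)] by simp
  qed
  with left right show ?thesis
    unfolding quad_form_G_balanced[OF bal] dot_split hub0 K0 by (auto simp: algebra_simps)
qed

lemma quad_form_G_ge_hub:
  assumes supp: "\<And>i. i < n \<Longrightarrow> i \<notin> K \<union> H \<Longrightarrow> w i = 0"
    and eq: "w (t - 2) = w t" and sum0: "(\<Sum>i\<in>K \<union> H. w i) = 0"
  shows "(real n - real d + 2) * dot n w w \<le> quad_form n (laplacian n G) w"
proof -
  let ?U = "K \<union> H"
  have U: "?U \<subseteq> {..<n}" using td dn by auto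
  have "t - 2 \<noteq> t - 1" "t - 2 \<noteq> t" "t - 1 \<noteq> t" using t2 by auto
  hence "card H = 3" by simp
  hence card_U: "real (card ?U) = real n - real d + 2"
    using real_card_K td by (subst card_Un_disjoint) auto
  \<comment> \<open>the only non-adjacent pair of distinct vertices in \<open>K \<union> H\<close> is \<open>{t - 2, t}\<close>, where \<open>w\<close> agrees\<close>
  have "(if G i j then (w i - w j)\<^sup>2 else 0) = (w i - w j)\<^sup>2" if "i \<in> ?U" "j \<in> ?U" for i j
    using that eq t2 td dn unfolding G_ndt_def by auto
  hence sum_U: "(\<Sum>i\<in>?U. \<Sum>j\<in>?U. if G i j then (w i - w j)\<^sup>2 else 0)
      = 2 * (real n - real d + 2) * (\<Sum>i\<in>?U. (w i)\<^sup>2)"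
    using sum_sum_sq_diff[of w ?U] sum0 card_U by simp
  have "(\<Sum>i\<in>?U. (w i)\<^sup>2) = dot n w w"
  proof -
    have "\<forall>i\<in>{..<n} - ?U. w i * w i = 0"
    proof
      fix i assume "i \<in> {..<n} - ?U"
      hence "w i = 0" by (intro supp) auto
      thus "w i * w i = 0" by simp
    qed
    thus ?thesis unfolding dot_def power2_eq_square
      by (rule sum.mono_neutral_cong_left[OF finite_lessThan U]) simp
  qed
  hence "(real n - real d + 2) * dot n w w
      = (\<Sum>i\<in>?U. \<Sum>j\<in>?U. if G i j then (w i - w j)\<^sup>2 else 0) / 2"
    unfolding sum_U by simp
  also have "\<dots> \<le> quad_form n (laplacian n G) w"
    by (rule laplacian_quad_form_ge_on[OF G_sym G_irrefl U])
  finally show ?thesis .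
qed

text \<open>The vectors hub_vec j (j \<in> insert (t - 2) K) span the vectors
  supported on K \<union> H with zero sum and equal entries at t - 2 and t. The vectors balanced_vec j
  (j < n, j \<noteq> t - 1) span the vectors whose entries on K and at t - 1 sum to zero; those with
  j \<le> d are unit vectors.\<close>

definition hub_vec :: "nat \<Rightarrow> nat \<Rightarrow> real" where
  "hub_vec j i = (if i = j then 1 else 0) - (if i = t - 1 then 1 else 0)
    + (if j = t - 2 then (if i = t then 1 else 0) - (if i = t - 1 then 1 else 0) else 0)"

definition balanced_vec :: "nat \<Rightarrow> nat \<Rightarrow> real" where
  "balanced_vec j i = (if i = j then 1 else 0) - (if j \<in> K \<and> i = t - 1 then 1 else 0)"

lemma card_hub_vec_index: "card (insert (t - 2) K) = n - d"
  using td dn by simp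

lemma card_path_vec_index: "card ({..d} - {t - 1}) = d"
  using t2 td by (simp add: card_Diff_singleton)

lemma card_balanced_vec_index: "card ({..<n} - {t - 1}) = n - 1"
  using td dn by (simp add: card_Diff_singleton)

lemma lin_indep_hub_vec: "lin_indep n (insert (t - 2) K) hub_vec"
  by (rule lin_indep_pivot) (use t2 td dn in \<open>auto simp: hub_vec_def\<close>)

lemma lin_indep_path_vec: "lin_indep n ({..d} - {t - 1}) balanced_vec"
  by (rule lin_indep_pivot) (use dn in \<open>auto simp: balanced_vec_def\<close>)

lemma lin_indep_balanced_vec: "lin_indep n ({..<n} - {t - 1}) balanced_vec"
  by (rule lin_indep_pivot) (auto simp: balanced_vec_def)

lemma rayleigh_hub_vec:
  fixes \<alpha> :: "nat \<Rightarrow> real"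
  defines "w \<equiv> lincomb (insert (t - 2) K) \<alpha> hub_vec"
  shows "(real n - real d + 2) * dot n w w \<le> quad_form n (laplacian n G) w"
  unfolding w_def
proof (rule quad_form_G_ge_hub)
  show "lincomb (insert (t - 2) K) \<alpha> hub_vec i = 0" if "i < n" "i \<notin> K \<union> H" for i
    by (rule lincomb_eq_0) (use that in \<open>auto simp: hub_vec_def\<close>)
  show "lincomb (insert (t - 2) K) \<alpha> hub_vec (t - 2) = lincomb (insert (t - 2) K) \<alpha> hub_vec t"
    by (rule lincomb_eq) (use t2 td in \<open>auto simp: hub_vec_def\<close>)
  have "(\<Sum>i\<in>K \<union> H. hub_vec j i) = 0" if "j \<in> insert (t - 2) K" for j
  proof -
    have "t - 1 \<in> K \<union> H" "t \<in> K \<union> H" "j \<in> K \<union> H" "t - 2 \<noteq> t - 1" "t - 2 \<noteq> t"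
      using that t2 by auto
    thus ?thesis unfolding hub_vec_def
      by (cases "j = t - 2") (simp_all add: sum.distrib sum_subtractf sum_distrib_left[symmetric])
  qed
  thus "(\<Sum>i\<in>K \<union> H. lincomb (insert (t - 2) K) \<alpha> hub_vec i) = 0"
    unfolding sum_lincomb by simp
qed

lemma rayleigh_balanced_vec:
  fixes \<alpha> :: "nat \<Rightarrow> real"
  defines "w \<equiv> lincomb ({..<n} - {t - 1}) \<alpha> balanced_vec"
  shows "quad_form n (laplacian n G) w \<le> (real n - real d + 2) * dot n w w"
  unfolding w_def
proof (rule quad_form_G_le_balanced)
  have "t - 1 \<notin> K" using td by auto
  have "(\<Sum>i\<in>insert (t - 1) K. balanced_vec j i) = 0" if "j \<in> {..<n} - {t - 1}" for j
    using that \<open>t - 1 \<notin> K\<close> unfolding balanced_vec_def by (cases "j \<in> K") (simp_all add: sum_subtractf)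
  hence "(\<Sum>i\<in>insert (t - 1) K. lincomb ({..<n} - {t - 1}) \<alpha> balanced_vec i) = 0"
    unfolding sum_lincomb by simp
  thus "(\<Sum>u\<in>K. lincomb ({..<n} - {t - 1}) \<alpha> balanced_vec u)
      + lincomb ({..<n} - {t - 1}) \<alpha> balanced_vec (t - 1) = 0"
    using \<open>t - 1 \<notin> K\<close> by (simp add: add.commute)
qed

lemma rayleigh_path_vec:
  fixes \<alpha> :: "nat \<Rightarrow> real"
  defines "w \<equiv> lincomb ({..d} - {t - 1}) \<alpha> balanced_vec"
  assumes "\<exists>j\<in>{..d} - {t - 1}. \<alpha> j \<noteq> 0"
  shows "quad_form n (laplacian n G) w < (real n - real d + 2) * dot n w w"
proof -
  obtain j where j: "j \<in> {..d} - {t - 1}" "\<alpha> j \<noteq> 0" using assms(2) by blast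
  have "w j = \<alpha> j"
    unfolding w_def by (rule lincomb_pivot) (use j in \<open>auto simp: balanced_vec_def\<close>)
  show ?thesis
  proof (rule quad_form_G_less_on_path)
    show "w u = 0" if "u \<in> K" for u
      unfolding w_def by (rule lincomb_eq_0) (use that in \<open>auto simp: balanced_vec_def\<close>)
    show "w (t - 1) = 0"
      unfolding w_def by (rule lincomb_eq_0) (use td in \<open>auto simp: balanced_vec_def\<close>)
  qed (use j \<open>w j = \<alpha> j\<close> in auto)
qed

lemma laplacian_eigenvalue_counts:
  assumes "sym_eigenbasis n (laplacian n G) p \<mu>"
  shows "card {j. j < n \<and> real n - real d + 2 \<le> \<mu> j} = n - d"
    and "card {j. j < n \<and> real n - real d + 2 < \<mu> j} \<le> 1"
    and "j < n \<Longrightarrow> \<mu> j \<le> real n"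
proof -
  interpret sym_eigenbasis n "laplacian n G" p \<mu> by (rule assms)
  have "n - d \<le> card {j. j < n \<and> real n - real d + 2 \<le> \<mu> j}"
    using card_le_card_eigenvalues_ge[OF _ lin_indep_hub_vec rayleigh_hub_vec] card_hub_vec_index
    by simp
  moreover have "d + card {j. j < n \<and> real n - real d + 2 \<le> \<mu> j} \<le> n"
    using card_add_card_eigenvalues_ge_le[OF _ lin_indep_path_vec rayleigh_path_vec]
      card_path_vec_index by simp
  ultimately show "card {j. j < n \<and> real n - real d + 2 \<le> \<mu> j} = n - d" by linarith
  show "card {j. j < n \<and> real n - real d + 2 < \<mu> j} \<le> 1"
    using card_add_card_eigenvalues_gt_le[OF _ lin_indep_balanced_vec rayleigh_balanced_vec]
      card_balanced_vec_index dn by simp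
  show "j < n \<Longrightarrow> \<mu> j \<le> real n"
    by (rule eigenvalue_le_if_quad_form_le[OF laplacian_quad_form_le[OF G_sym G_irrefl]])
qed

end

theorem lemma2p6:
  fixes n d t :: nat
  assumes "2 \<le> d" and "d + 2 \<le> n" and "2 \<le> t" and "t \<le> d"
  shows "lap_count n (G_ndt n d t) {real n - real d + 2 .. real n} = n - d
    \<and> lap_mu n (G_ndt n d t) (n - d) = real n - real d + 2"
proof -
  interpret ndt_graph n d t using assms by unfold_locales
  let ?L = "laplacian n (G_ndt n d t)" and ?c = "real n - real d + 2"
  have "?L \<in> carrier_mat n n" and "\<And>i j. i < n \<Longrightarrow> j < n \<Longrightarrow> ?L $$ (i,j) = ?L $$ (j,i)"
    by (auto simp: laplacian_def G_sym)
  then obtain p \<mu> where basis: "sym_eigenbasis n ?L p \<mu>"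
    and char_poly: "char_poly ?L = (\<Prod>j<n. [:- \<mu> j, 1:])"
    by (rule sym_mat_eigenbasis)
  note counts = laplacian_eigenvalue_counts[OF basis]
  have eigs: "lap_eigs n (G_ndt n d t) = image_mset \<mu> (mset_set {..<n})"
    unfolding lap_eigs_def char_poly by (rule proots_prod_linear)
  have "{j \<in> {..<n}. \<mu> j \<in> {?c..real n}} = {j. j < n \<and> ?c \<le> \<mu> j}"
    using counts(3) by auto
  thus ?thesis
    unfolding lap_count_def lap_mu_def eigs size_filter_image_mset_set[OF finite_lessThan]
    using counts(1,2) assms nth_largest_eq[of ?c _ "n - d"] by (simp add: size_filter_image_mset_set)
qed

end
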